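(* Let $F_n$ be a free group of rank $n \ge 2$ and let $F(a,b)$ be the free group with basis $\{a,b\}$. Let $g, h \in F_n$ be translation equivalent in $F_n$ and let $w(a,b) \in F(a,b)$ be arbitrary. Then $w(g,h)$ and $w(h,g)$ are translation equivalent in $F_n$.
   Context: Fix a free basis $\Sigma$ of $F_n$. For $v \in F_n$, the cyclic length $\|v\|$ is the length (over $\Sigma$) of a cyclically reduced word conjugate to $v$, i.e. the length of the cyclic word associated with $v$. Two elements $g, h \in F_n$ are called translation equivalent in $F_n$ if $\|\phi(g)\| = \|\phi(h)\|$ for every automorphism $\phi$ of $F_n$. For $w(a,b) \in F(a,b)$ and $g,h \in F_n$, $w(g,h)$ denotes the image of $w$ under the homomorphism $F(a,b)\to F_n$ sending $a \mapsto g$, $b \mapsto h$. *)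

theory Defs
  imports "HOL-Algebra.Group"
begin

text \<open>A letter is (i, e): the basis element x_i if e = False, its inverse if e = True.\<close>
type_synonym letter = "nat \<times> bool"

definition inv_letter :: "letter \<Rightarrow> letter" where
  "inv_letter x = (fst x, \<not> snd x)"

fun reduced :: "letter list \<Rightarrow> bool" where
  "reduced [] = True"
| "reduced [x] = True"
| "reduced (x # y # ws) = (y \<noteq> inv_letter x \<and> reduced (y # ws))"

definition words_Fn :: "nat \<Rightarrow> letter list set" where
  "words_Fn n = {w. reduced w \<and> (\<forall>x \<in> set w. fst x < n)}"

definition cons_red :: "letter \<Rightarrow> letter list \<Rightarrow> letter list" where
  "cons_red x w = (case w of [] \<Rightarrow> [x] | y # ws \<Rightarrow> (if y = inv_letter x then ws else x # w))"

definition fmult :: "letter list \<Rightarrow> letter list \<Rightarrow> letter list" where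
  "fmult u v = foldr cons_red u v"

definition finv :: "letter list \<Rightarrow> letter list" where
  "finv w = rev (map inv_letter w)"

definition free_grp :: "nat \<Rightarrow> letter list monoid" where
  "free_grp n = \<lparr>carrier = words_Fn n, mult = fmult, one = []\<rparr>"

function cyc_reduce :: "letter list \<Rightarrow> letter list" where
  "cyc_reduce w = (if 2 \<le> length w \<and> hd w = inv_letter (last w)
                    then cyc_reduce (butlast (tl w)) else w)"
  by pat_completeness auto
termination by (relation "measure length") auto

definition cyc_len :: "letter list \<Rightarrow> nat" where
  "cyc_len w = length (cyc_reduce w)"

definition translation_equivalent :: "nat \<Rightarrow> letter list \<Rightarrow> letter list \<Rightarrow> bool" where
  "translation_equivalent n g h \<longleftrightarrow>
     (\<forall>\<phi> \<in> iso (free_grp n) (free_grp n). cyc_len (\<phi> g) = cyc_len (\<phi> h))"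

text \<open>F(a,b) = free_grp 2 with a = letter 0 and b = letter 1.\<close>
definition letter_img :: "letter list \<Rightarrow> letter list \<Rightarrow> letter \<Rightarrow> letter list" where
  "letter_img g h x = (let z = (if fst x = 0 then g else h) in if snd x then finv z else z)"

definition subst2 :: "letter list \<Rightarrow> letter list \<Rightarrow> letter list \<Rightarrow> letter list" where
  "subst2 w g h = foldr (\<lambda>x acc. fmult (letter_img g h x) acc) w []"

end

(* Simultaneously conjugating g and h changes neither the cyclic lengths involved nor the claim,
   and translation equivalence is only used through ||phi g|| = ||phi h|| for each automorphism phi. If h = g^-1, then w(g,h) and w(h,g) are inverse
   elements of the cyclic group generated by g. Otherwise conjugate (g,h) to a pair of minimal
   total length. Minimality forces either both g and h to be cyclically reduced (of equal length),
   or the ends of one to avoid the ends of the other; in both cases an explicit computation of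
   the cancellation c(x,y) between the images of letters x, y of F(a,b) shows:
   (1) bounded cancellation: for reduced w, the image of every letter of w keeps a letter in
       w(g,h), so ||w(g,h)|| (computed as |u u| - |u| for u = w(g,h)) is the sum of the edge
       weights |x(g,h)| - 2 c(x,y) over the consecutive letters x, y of the cyclic word w;
   (2) the edge weights for (g,h) and for (h,g) differ by a coboundary f x - f y, which sums to
       zero around the cyclic word w. *)
theory Submission
  imports Defs
begin

lemma inv_letter_inv_letter [simp]: "inv_letter (inv_letter x) = x"
  by (simp add: inv_letter_def)

lemma inv_letter_neq [simp]: "inv_letter x \<noteq> x" "x \<noteq> inv_letter x"
  by (auto simp: inv_letter_def prod_eq_iff)

lemma inv_letter_eq_iff [simp]: "inv_letter x = inv_letter y \<longleftrightarrow> x = y"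
  by (metis inv_letter_inv_letter)

lemma inv_letter_Pair [simp]: "inv_letter (i, e) = (i, \<not> e)"
  by (simp add: inv_letter_def)

lemma reduced_Cons_iff: "reduced (x # w) \<longleftrightarrow> reduced w \<and> (w \<noteq> [] \<longrightarrow> hd w \<noteq> inv_letter x)"
  by (cases w) auto

lemma reduced_append_iff:
  "reduced (u @ v) \<longleftrightarrow> reduced u \<and> reduced v \<and> (u \<noteq> [] \<longrightarrow> v \<noteq> [] \<longrightarrow> hd v \<noteq> inv_letter (last u))"
  by (induction u) (auto simp: reduced_Cons_iff)

lemma reduced_tl: "reduced w \<Longrightarrow> reduced (tl w)"
  by (cases w) (auto simp: reduced_Cons_iff)

lemma finv_Nil [simp]: "finv [] = []"
  and finv_Cons: "finv (x # w) = finv w @ [inv_letter x]"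
  and finv_append: "finv (u @ v) = finv v @ finv u"
  and finv_finv [simp]: "finv (finv w) = w"
  and length_finv [simp]: "length (finv w) = length w"
  and finv_eq_Nil_iff [simp]: "finv w = [] \<longleftrightarrow> w = []"
  and set_finv: "set (finv w) = inv_letter ` set w"
  by (simp_all add: finv_def rev_map comp_def)

lemma hd_finv: "w \<noteq> [] \<Longrightarrow> hd (finv w) = inv_letter (last w)"
  and last_finv: "w \<noteq> [] \<Longrightarrow> last (finv w) = inv_letter (hd w)"
  by (simp_all add: finv_def hd_rev last_rev hd_map last_map)

lemma nth_finv: "i < length w \<Longrightarrow> finv w ! i = inv_letter (w ! (length w - Suc i))"
  by (simp add: finv_def rev_nth)

lemma reduced_finv_iff [simp]: "reduced (finv w) \<longleftrightarrow> reduced w"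
  by (induction w) (auto simp: finv_Cons reduced_append_iff reduced_Cons_iff last_finv)

lemma cons_red_noncancel: "w = [] \<or> hd w \<noteq> inv_letter x \<Longrightarrow> cons_red x w = x # w"
  by (cases w) (auto simp: cons_red_def)

lemma cons_red_cancel: "cons_red x (inv_letter x # w) = w"
  by (simp add: cons_red_def)

lemma reduced_cons_red: "reduced w \<Longrightarrow> reduced (cons_red x w)"
  by (cases w) (auto simp: cons_red_def reduced_Cons_iff reduced_tl)

lemma cons_red_inv_letter: "reduced w \<Longrightarrow> cons_red x (cons_red (inv_letter x) w) = w"
  by (cases w) (auto simp: cons_red_def reduced_Cons_iff split: list.splits)

lemma set_cons_red: "set (cons_red x w) \<subseteq> insert x (set w)"
  by (cases w) (auto simp: cons_red_def)

lemma length_cons_red: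
  "length (cons_red x w) = (if w \<noteq> [] \<and> hd w = inv_letter x then length w - 1 else Suc (length w))"
  by (cases w) (auto simp: cons_red_def)

lemma fmult_Nil [simp]: "fmult [] v = v"
  and fmult_Cons: "fmult (x # u) v = cons_red x (fmult u v)"
  and fmult_append: "fmult (u @ v) w = fmult u (fmult v w)"
  by (simp_all add: fmult_def)

lemma reduced_fmult: "reduced v \<Longrightarrow> reduced (fmult u v)"
  by (induction u) (auto simp: fmult_Cons reduced_cons_red)

lemma set_fmult: "set (fmult u v) \<subseteq> set u \<union> set v"
  by (induction u) (use set_cons_red in \<open>fastforce simp: fmult_Cons\<close>)+

lemma fmult_cons_red:
  assumes "reduced y" "reduced w"
  shows "fmult (cons_red x y) w = cons_red x (fmult y w)"
proof (cases "y \<noteq> [] \<and> hd y = inv_letter x")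
  case True
  then obtain y' where y: "y = inv_letter x # y'"
    by (cases y) auto
  have "reduced (fmult y' w)"
    using assms by (simp add: reduced_fmult)
  then show ?thesis
    using y by (simp add: cons_red_cancel fmult_Cons cons_red_inv_letter)
next
  case False
  then show ?thesis
    by (simp add: cons_red_noncancel fmult_Cons)
qed

lemma fmult_assoc: "reduced v \<Longrightarrow> reduced w \<Longrightarrow> fmult (fmult u v) w = fmult u (fmult v w)"
  by (induction u) (auto simp: fmult_Cons fmult_cons_red reduced_fmult)

lemma fmult_Nil_right: "reduced u \<Longrightarrow> fmult u [] = u"
  by (induction u) (auto simp: fmult_Cons reduced_Cons_iff cons_red_noncancel)

lemma fmult_finv_left: "fmult (finv u) u = []"
proof (induction u)
  case (Cons x u)
  then show ?case
    by (simp add: finv_Cons fmult_append fmult_Cons cons_red_cancel[of "inv_letter x", simplified])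
qed simp

lemma fmult_finv_right: "fmult u (finv u) = []"
  using fmult_finv_left[of "finv u"] by simp

lemma carrier_free_grp_iff: "z \<in> carrier (free_grp n) \<longleftrightarrow> reduced z \<and> (\<forall>x\<in>set z. fst x < n)"
  by (simp add: free_grp_def words_Fn_def)

lemma mult_free_grp [simp]: "x \<otimes>\<^bsub>free_grp n\<^esub> y = fmult x y"
  and one_free_grp [simp]: "\<one>\<^bsub>free_grp n\<^esub> = []"
  by (simp_all add: free_grp_def)

lemma reduced_if_carrier: "z \<in> carrier (free_grp n) \<Longrightarrow> reduced z"
  by (simp add: carrier_free_grp_iff)

lemma fmult_carrier:
  "u \<in> carrier (free_grp n) \<Longrightarrow> v \<in> carrier (free_grp n) \<Longrightarrow> fmult u v \<in> carrier (free_grp n)"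
  using set_fmult[of u v] by (fastforce simp: carrier_free_grp_iff reduced_fmult)

lemma finv_carrier: "z \<in> carrier (free_grp n) \<Longrightarrow> finv z \<in> carrier (free_grp n)"
  by (auto simp: carrier_free_grp_iff set_finv)

lemma group_free_grp: "group (free_grp n)"
proof (rule groupI)
  fix x assume "x \<in> carrier (free_grp n)"
  then show "\<exists>y\<in>carrier (free_grp n). y \<otimes>\<^bsub>free_grp n\<^esub> x = \<one>\<^bsub>free_grp n\<^esub>"
    by (intro bexI[of _ "finv x"]) (simp_all add: fmult_finv_left finv_carrier)
qed (simp_all add: fmult_carrier reduced_if_carrier fmult_assoc, simp add: carrier_free_grp_iff)

lemma inv_free_grp: "x \<in> carrier (free_grp n) \<Longrightarrow> inv\<^bsub>free_grp n\<^esub> x = finv x"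
  by (intro group.inv_equality[OF group_free_grp]) (simp_all add: fmult_finv_left finv_carrier)

lemma finv_fmult:
  assumes "a \<in> carrier (free_grp n)" "b \<in> carrier (free_grp n)"
  shows "finv (fmult a b) = fmult (finv b) (finv a)"
  using group.inv_mult_group[OF group_free_grp assms] assms
  by (simp add: inv_free_grp fmult_carrier)

section \<open>Cancellation in products\<close>

fun inv_prefix_len :: "letter list \<Rightarrow> letter list \<Rightarrow> nat" where
  "inv_prefix_len (x # xs) (y # ys) = (if y = inv_letter x then Suc (inv_prefix_len xs ys) else 0)"
| "inv_prefix_len _ _ = 0"

definition cancel_len :: "letter list \<Rightarrow> letter list \<Rightarrow> nat" where
  "cancel_len X Y = inv_prefix_len (rev X) Y"

lemma inv_prefix_len_le: "inv_prefix_len R Y \<le> length R" "inv_prefix_len R Y \<le> length Y"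
  by (induction R Y rule: inv_prefix_len.induct) auto

lemma nth_inv_prefix_len: "i < inv_prefix_len R Y \<Longrightarrow> Y ! i = inv_letter (R ! i)"
  by (induction R Y arbitrary: i rule: inv_prefix_len.induct) (auto simp: nth_Cons' split: if_splits)

lemma inv_prefix_len_pos_iff:
  "0 < inv_prefix_len R Y \<longleftrightarrow> R \<noteq> [] \<and> Y \<noteq> [] \<and> hd Y = inv_letter (hd R)"
  by (cases "(R, Y)" rule: inv_prefix_len.cases) auto

lemma inv_prefix_len_swap: "inv_prefix_len R Y = inv_prefix_len (map inv_letter Y) (map inv_letter R)"
  by (induction R Y rule: inv_prefix_len.induct) auto

lemma inv_prefix_len_append: "inv_prefix_len (map inv_letter p @ A) (p @ B) = length p + inv_prefix_len A B"
  by (induction p) auto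

lemma inv_prefix_len_take:
  assumes "inv_prefix_len R Y < length R" "inv_prefix_len R Y < length Y"
    and "take (Suc (inv_prefix_len R Y)) Y' = take (Suc (inv_prefix_len R Y)) Y"
  shows "inv_prefix_len R Y' = inv_prefix_len R Y"
  using assms
proof (induction R Y arbitrary: Y' rule: inv_prefix_len.induct)
  case (1 x xs y ys)
  obtain ys' where Y': "Y' = y # ys'"
    using "1.prems"(3) by (cases Y') auto
  show ?case
  proof (cases "y = inv_letter x")
    case True
    then have "inv_prefix_len xs ys' = inv_prefix_len xs ys"
      using "1.prems" Y' by (intro "1.IH") auto
    then show ?thesis
      using True Y' by simp
  qed (simp add: Y')
qed auto

lemma cancel_len_le: "cancel_len X Y \<le> length X" "cancel_len X Y \<le> length Y"
  using inv_prefix_len_le[of "rev X" Y] by (simp_all add: cancel_len_def)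

lemma cancel_len_pos_iff: "0 < cancel_len X Y \<longleftrightarrow> X \<noteq> [] \<and> Y \<noteq> [] \<and> hd Y = inv_letter (last X)"
  by (simp add: cancel_len_def inv_prefix_len_pos_iff hd_rev)

lemma cancel_len_eq_0_iff: "cancel_len X Y = 0 \<longleftrightarrow> X = [] \<or> Y = [] \<or> hd Y \<noteq> inv_letter (last X)"
  using cancel_len_pos_iff[of X Y] by auto

lemma cancel_len_finv: "cancel_len X Y = cancel_len (finv Y) (finv X)"
  by (simp add: cancel_len_def finv_def inv_prefix_len_swap[of "rev X"] rev_map)

lemma cancel_len_finv_self: "cancel_len (finv X) (finv X) = cancel_len X X"
  using cancel_len_finv[of "finv X" "finv X"] by simp

lemma nth_cancel_len: "i < cancel_len X Y \<Longrightarrow> Y ! i = inv_letter (X ! (length X - Suc i))"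
  using nth_inv_prefix_len[of i "rev X" Y] cancel_len_le[of X Y] by (simp add: cancel_len_def rev_nth)

lemma fmult_rev_eq_drop:
  "reduced (rev R) \<Longrightarrow> reduced Y \<Longrightarrow>
   fmult (rev R) Y = rev (drop (inv_prefix_len R Y) R) @ drop (inv_prefix_len R Y) Y"
proof (induction R arbitrary: Y)
  case (Cons x R)
  have rR: "reduced (rev R)"
    using Cons.prems(1) by (simp add: reduced_append_iff)
  have eq: "fmult (rev (x # R)) Y = fmult (rev R) (cons_red x Y)"
    by (simp add: fmult_append fmult_Cons)
  show ?case
  proof (cases "Y \<noteq> [] \<and> hd Y = inv_letter x")
    case True
    then obtain Y' where Y: "Y = inv_letter x # Y'"
      by (cases Y) auto
    then show ?thesis
      using eq Cons.IH[OF rR, of Y'] Cons.prems(2) by (simp add: cons_red_cancel reduced_Cons_iff)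
  next
    case False
    have rxY: "reduced (x # Y)"
      using False Cons.prems(2) unfolding reduced_Cons_iff by blast
    have "inv_prefix_len R (x # Y) = 0"
      using Cons.prems(1) by (cases R) (auto simp: reduced_append_iff)
    moreover have "inv_prefix_len (x # R) Y = 0"
      using False by (cases Y) auto
    ultimately show ?thesis
      using eq Cons.IH[OF rR rxY] False by (simp add: cons_red_noncancel)
  qed
qed simp

lemma fmult_eq_take_drop:
  "reduced X \<Longrightarrow> reduced Y \<Longrightarrow>
   fmult X Y = take (length X - cancel_len X Y) X @ drop (cancel_len X Y) Y"
  using fmult_rev_eq_drop[of "rev X" Y] by (simp add: cancel_len_def rev_drop)

lemma fmult_eq_take_drop_prefix:
  assumes "reduced X" "reduced P" "cancel_len X Y < length X" "cancel_len X Y < length Y"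
    and "take (Suc (cancel_len X Y)) P = take (Suc (cancel_len X Y)) Y"
  shows "fmult X P = take (length X - cancel_len X Y) X @ drop (cancel_len X Y) P"
proof -
  have "cancel_len X P = cancel_len X Y"
    using inv_prefix_len_take[of "rev X" Y P] assms(3-5) by (simp add: cancel_len_def)
  then show ?thesis
    using fmult_eq_take_drop[OF assms(1,2)] by simp
qed

lemma length_fmult:
  "reduced X \<Longrightarrow> reduced Y \<Longrightarrow> length (fmult X Y) = length X + length Y - 2 * cancel_len X Y"
  using fmult_eq_take_drop[of X Y] cancel_len_le[of X Y] by simp

lemma fmult_snoc:
  assumes "reduced z"
  shows "fmult z [b] = (if z \<noteq> [] \<and> last z = inv_letter b then butlast z else z @ [b])"
proof -
  have "cancel_len z [b] = (if z \<noteq> [] \<and> last z = inv_letter b then 1 else 0)"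
    using cancel_len_le(2)[of z "[b]"] cancel_len_pos_iff[of z "[b]"] by auto
  then show ?thesis
    using fmult_eq_take_drop[OF assms, of "[b]"] by (simp add: butlast_conv_take)
qed

section \<open>Cyclic reduction\<close>

definition cyclically_reduced :: "letter list \<Rightarrow> bool" where
  "cyclically_reduced C \<longleftrightarrow> C = [] \<or> hd C \<noteq> inv_letter (last C)"

declare cyc_reduce.simps [simp del]

lemma cyc_reduce_eq_self: "cyclically_reduced C \<Longrightarrow> cyc_reduce C = C"
  by (subst cyc_reduce.simps) (auto simp: cyclically_reduced_def)

lemma cyc_reduce_Cons_snoc: "cyc_reduce (inv_letter x # w @ [x]) = cyc_reduce w"
  by (subst cyc_reduce.simps) simp

lemma cyclically_reduced_cyc_reduce: "cyclically_reduced (cyc_reduce U)"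
proof (induction U rule: cyc_reduce.induct)
  case (1 w)
  show ?case
  proof (cases "2 \<le> length w \<and> hd w = inv_letter (last w)")
    case True
    have "cyc_reduce w = cyc_reduce (butlast (tl w))"
      by (subst cyc_reduce.simps) (rule if_P[OF True])
    with 1 True show ?thesis
      by simp
  next
    case False
    then have "cyclically_reduced w"
      by (cases w) (auto simp: cyclically_reduced_def Suc_le_eq)
    then show ?thesis
      by (simp add: cyc_reduce_eq_self)
  qed
qed

lemma cyc_reduce_decomp: "\<exists>p. U = p @ cyc_reduce U @ finv p"
proof (induction U rule: cyc_reduce.induct)
  case (1 w)
  show ?case
  proof (cases "2 \<le> length w \<and> hd w = inv_letter (last w)")
    case True
    then obtain y t where yt: "w = y # t" "t \<noteq> []"
      by (cases w) (auto simp: Suc_le_eq)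
    define x m C where "x = last t" and "m = butlast t" and "C = cyc_reduce m"
    have w: "w = inv_letter x # m @ [x]"
      using True yt by (simp add: x_def m_def)
    obtain p where m: "m = p @ C @ finv p"
      using "1"[OF True] unfolding C_def m_def yt list.sel ..
    have "w = (inv_letter x # p) @ C @ finv (inv_letter x # p)"
      by (simp add: w m finv_Cons)
    moreover have "cyc_reduce w = C"
      by (simp add: w C_def cyc_reduce_Cons_snoc)
    ultimately show ?thesis
      by metis
  next
    case False
    have "cyc_reduce w = w"
      by (subst cyc_reduce.simps) (rule if_not_P[OF False])
    then show ?thesis
      by (intro exI[of _ "[]"]) simp
  qed
qed

lemma cyc_reduce_conjugate_word: "cyclically_reduced D \<Longrightarrow> cyc_reduce (p @ D @ finv p) = D"
proof (induction p)
  case (Cons x p)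
  have "(x # p) @ D @ finv (x # p) = inv_letter (inv_letter x) # (p @ D @ finv p) @ [inv_letter x]"
    by (simp add: finv_Cons)
  then show ?case
    using Cons by (simp only: cyc_reduce_Cons_snoc)
qed (simp add: cyc_reduce_eq_self)

lemma reduced_append_finv_imp_Nil: "reduced (p @ finv p) \<Longrightarrow> p = []"
  by (cases p rule: rev_cases) (auto simp: reduced_append_iff finv_append finv_Cons)

lemma reduced_cyclic_decomp:
  assumes "reduced U"
  obtains p C where "U = p @ C @ finv p" "cyclically_reduced C" "reduced C" "cyc_len U = length C"
proof -
  define C where "C = cyc_reduce U"
  obtain p where p: "U = p @ C @ finv p"
    using cyc_reduce_decomp unfolding C_def ..
  have "reduced C"
    using assms p by (simp add: reduced_append_iff)
  moreover have "cyc_len U = length C" "cyclically_reduced C"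
    by (simp_all add: cyc_len_def C_def cyclically_reduced_cyc_reduce)
  ultimately show ?thesis
    using that[OF p] by blast
qed

lemma cyc_len_conjugate_word: "cyclically_reduced D \<Longrightarrow> cyc_len (p @ D @ finv p) = length D"
  by (simp add: cyc_len_def cyc_reduce_conjugate_word)

lemma cyc_len_eq_length: "cyclically_reduced z \<Longrightarrow> cyc_len z = length z"
  by (simp add: cyc_len_def cyc_reduce_eq_self)

lemma cyc_len_eq_0_iff:
  assumes "reduced z"
  shows "cyc_len z = 0 \<longleftrightarrow> z = []"
proof
  obtain p C where z: "z = p @ C @ finv p" and "cyc_len z = length C"
    using assms by (rule reduced_cyclic_decomp)
  moreover assume "cyc_len z = 0"
  ultimately have "reduced (p @ finv p)"
    using assms by simp
  then show "z = []"
    using z \<open>cyc_len z = 0\<close> \<open>cyc_len z = length C\<close> by (simp add: reduced_append_finv_imp_Nil)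
qed (simp add: cyc_len_eq_length cyclically_reduced_def)

lemma cyc_len_finv: "reduced z \<Longrightarrow> cyc_len (finv z) = cyc_len z"
proof -
  assume "reduced z"
  then obtain p C where z: "z = p @ C @ finv p" and C: "cyclically_reduced C" "cyc_len z = length C"
    by (rule reduced_cyclic_decomp)
  have "cyclically_reduced (finv C)"
    using C by (cases "C = []") (auto simp: cyclically_reduced_def hd_finv last_finv)
  then show ?thesis
    using z C by (simp add: finv_append cyc_len_conjugate_word)
qed

lemma cancel_len_conjugate_self:
  assumes "C \<noteq> []" "cyclically_reduced C"
  shows "cancel_len (p @ C @ finv p) (p @ C @ finv p) = length p"
proof -
  have "rev (p @ C @ finv p) = map inv_letter p @ (rev C @ rev p)"
    by (simp add: finv_def rev_map)
  moreover have "\<not> 0 < inv_prefix_len (rev C @ rev p) (C @ finv p)"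
    using assms by (simp add: inv_prefix_len_pos_iff hd_rev cyclically_reduced_def)
  ultimately show ?thesis
    by (simp add: cancel_len_def inv_prefix_len_append)
qed

lemma length_fmult_self:
  assumes U: "reduced U"
  shows "length (fmult U U) = length U + cyc_len U"
proof -
  obtain p C where p: "U = p @ C @ finv p" and C: "cyclically_reduced C" "cyc_len U = length C"
    using U by (rule reduced_cyclic_decomp)
  show ?thesis
  proof (cases "C = []")
    case True
    then show ?thesis
      using C U by (simp add: cyc_len_eq_0_iff)
  next
    case False
    then have "cancel_len U U = length p"
      using cancel_len_conjugate_self[OF False C(1)] p by simp
    then show ?thesis
      using length_fmult[OF U U] p C by simp
  qed
qed

lemma cyc_len_rotate1:
  assumes "reduced (x # A)" "reduced (A @ [x])"
  shows "cyc_len (x # A) = cyc_len (A @ [x])"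
proof (cases "A = []")
  case False
  then have "cyclically_reduced (x # A)" "cyclically_reduced (A @ [x])"
    using assms by (auto simp: cyclically_reduced_def reduced_append_iff reduced_Cons_iff)
  then show ?thesis
    by (simp add: cyc_len_eq_length)
qed simp

lemma cyc_len_Cons_snoc: "cyc_len (inv_letter x # A @ [x]) = cyc_len A"
  by (simp add: cyc_len_def cyc_reduce_Cons_snoc)

definition conjugate :: "letter list \<Rightarrow> letter list \<Rightarrow> letter list" where
  "conjugate c z = fmult c (fmult z (finv c))"

lemma conjugate_letter: "conjugate [t] z = cons_red t (fmult z [inv_letter t])"
  by (simp add: conjugate_def finv_def fmult_Cons)

lemma reduced_conjugate_letter: "reduced (conjugate [t] z)"
  by (simp add: conjugate_letter reduced_cons_red reduced_fmult)

lemma cyc_len_conjugate_letter_snoc: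
  assumes z: "reduced (A @ [t])"
  shows "cyc_len (conjugate [t] (A @ [t])) = cyc_len (A @ [t])"
proof -
  have At: "fmult (A @ [t]) [inv_letter t] = A"
    using fmult_snoc[OF z] by simp
  show ?thesis
  proof (cases "A \<noteq> [] \<and> hd A = inv_letter t")
    case True
    then obtain A' where A': "A = inv_letter t # A'"
      by (cases A) auto
    then show ?thesis
      using At by (simp add: conjugate_letter cons_red_cancel cyc_len_Cons_snoc)
  next
    case False
    then have "conjugate [t] (A @ [t]) = t # A"
      using At by (simp add: conjugate_letter cons_red_noncancel)
    then show ?thesis
      using cyc_len_rotate1[of t A] reduced_conjugate_letter[of t "A @ [t]"] z by simp
  qed
qed

(* Conjugating by a letter strips a cancelling pair of end letters, rotates the word by one
   letter, or adds a cancelling pair of end letters. *)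
lemma cyc_len_conjugate_letter:
  assumes z: "reduced z"
  shows "cyc_len (conjugate [t] z) = cyc_len z"
proof -
  consider "z = []" | A where "z = A @ [t]" | "z \<noteq> []" "last z \<noteq> t"
    by (metis append_butlast_last_id)
  then show ?thesis
  proof cases
    case 1
    then show ?thesis
      by (simp add: conjugate_letter cons_red_def)
  next
    case 2
    then show ?thesis
      using cyc_len_conjugate_letter_snoc z by blast
  next
    case 3
    then have zt: "conjugate [t] z = cons_red t (z @ [inv_letter t])"
      using fmult_snoc[OF z] by (simp add: conjugate_letter)
    show ?thesis
    proof (cases "hd z = inv_letter t")
      case True
      then obtain z' where z': "z = inv_letter t # z'"
        using 3 by (cases z) auto
      then have "conjugate [t] z = z' @ [inv_letter t]"
        unfolding zt by (simp add: cons_red_cancel)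
      then show ?thesis
        using cyc_len_rotate1[of "inv_letter t" z'] reduced_conjugate_letter[of t z] z z' by simp
    next
      case False
      then have "conjugate [t] z = inv_letter (inv_letter t) # z @ [inv_letter t]"
        unfolding zt using 3 by (subst cons_red_noncancel) auto
      then show ?thesis
        by (simp only: cyc_len_Cons_snoc)
    qed
  qed
qed

lemma conjugate_carrier:
  "c \<in> carrier (free_grp n) \<Longrightarrow> z \<in> carrier (free_grp n) \<Longrightarrow> conjugate c z \<in> carrier (free_grp n)"
  by (simp add: conjugate_def fmult_carrier finv_carrier)

lemma conjugate_conjugate:
  assumes "c \<in> carrier (free_grp n)" "d \<in> carrier (free_grp n)" "z \<in> carrier (free_grp n)"
  shows "conjugate d (conjugate c z) = conjugate (fmult d c) z"
  using assms finv_fmult[of d n c]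
  by (simp add: conjugate_def fmult_assoc reduced_fmult reduced_if_carrier finv_carrier)

lemma conjugate_finv_conjugate:
  assumes "c \<in> carrier (free_grp n)" "z \<in> carrier (free_grp n)"
  shows "conjugate (finv c) (conjugate c z) = z"
  using assms conjugate_conjugate[OF assms(1) finv_carrier[OF assms(1)] assms(2)]
  by (simp add: fmult_finv_left conjugate_def fmult_Nil_right reduced_if_carrier)

lemma finv_conjugate:
  assumes "c \<in> carrier (free_grp n)" "z \<in> carrier (free_grp n)"
  shows "finv (conjugate c z) = conjugate c (finv z)"
  using assms
  by (simp add: conjugate_def finv_fmult fmult_carrier finv_carrier fmult_assoc reduced_if_carrier)

lemma conjugate_hom:
  assumes c: "c \<in> carrier (free_grp n)"
  shows "conjugate c \<in> hom (free_grp n) (free_grp n)"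
proof (rule homI)
  fix x y assume "x \<in> carrier (free_grp n)" "y \<in> carrier (free_grp n)"
  moreover have "fmult (finv c) (fmult c v) = v" if "reduced v" for v
    using c that by (simp add: fmult_assoc[symmetric] fmult_finv_left reduced_if_carrier)
  ultimately show "conjugate c (x \<otimes>\<^bsub>free_grp n\<^esub> y) = conjugate c x \<otimes>\<^bsub>free_grp n\<^esub> conjugate c y"
    using c by (simp add: conjugate_def fmult_assoc reduced_fmult reduced_if_carrier finv_carrier)
qed (simp add: c conjugate_carrier)

lemma cyc_len_conjugate:
  assumes "c \<in> carrier (free_grp n)" "z \<in> carrier (free_grp n)"
  shows "cyc_len (conjugate c z) = cyc_len z"
  using assms(1)
proof (induction c)
  case Nil
  then show ?case
    using assms(2) by (simp add: conjugate_def fmult_Nil_right reduced_if_carrier)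
next
  case (Cons t c)
  have c: "c \<in> carrier (free_grp n)" and t: "[t] \<in> carrier (free_grp n)"
    using Cons.prems by (auto simp: carrier_free_grp_iff reduced_Cons_iff)
  have "reduced (t # c)"
    using Cons.prems by (rule reduced_if_carrier)
  then have "fmult [t] c = t # c"
    unfolding fmult_Cons fmult_Nil by (intro cons_red_noncancel) (auto simp: reduced_Cons_iff)
  then have "conjugate (t # c) z = conjugate [t] (conjugate c z)"
    using conjugate_conjugate[OF c t assms(2)] by simp
  then show ?case
    using Cons.IH[OF c] cyc_len_conjugate_letter conjugate_carrier[OF c assms(2)]
    by (simp add: reduced_if_carrier)
qed

lemma letter_img_simps [simp]:
  "letter_img g h (0, False) = g" "letter_img g h (0, True) = finv g"
  "letter_img g h (1, False) = h" "letter_img g h (1, True) = finv h"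
  "letter_img g h (Suc 0, False) = h" "letter_img g h (Suc 0, True) = finv h"
  by (simp_all add: letter_img_def)

lemma fst_less_2_cases:
  "fst (x :: letter) < 2 \<Longrightarrow> x = (0, False) \<or> x = (0, True) \<or> x = (1, False) \<or> x = (1, True)"
  by (cases x) (auto simp: less_2_cases_iff)

lemma length_letter_img:
  "fst x < 2 \<Longrightarrow> length (letter_img g h x) = (if fst x = 0 then length g else length h)"
  by (auto dest: fst_less_2_cases)

lemma letter_img_inv_letter: "letter_img g h (inv_letter x) = finv (letter_img g h x)"
  by (simp add: letter_img_def inv_letter_def Let_def)

lemma letter_img_carrier:
  "g \<in> carrier (free_grp n) \<Longrightarrow> h \<in> carrier (free_grp n) \<Longrightarrow> letter_img g h x \<in> carrier (free_grp n)"
  by (simp add: letter_img_def Let_def finv_carrier)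

lemma subst2_Nil [simp]: "subst2 [] g h = []"
  and subst2_Cons: "subst2 (x # w) g h = fmult (letter_img g h x) (subst2 w g h)"
  by (simp_all add: subst2_def)

context
  fixes g h :: "letter list" and n :: nat
  assumes g: "g \<in> carrier (free_grp n)" and h: "h \<in> carrier (free_grp n)"
begin

lemma reduced_letter_img: "reduced (letter_img g h x)"
  using letter_img_carrier[OF g h] by (rule reduced_if_carrier)

lemma subst2_carrier: "subst2 w g h \<in> carrier (free_grp n)"
  by (induction w) (simp add: carrier_free_grp_iff, simp add: subst2_Cons fmult_carrier letter_img_carrier g h)

lemma reduced_subst2: "reduced (subst2 w g h)"
  using subst2_carrier by (rule reduced_if_carrier)

lemma subst2_append: "subst2 (u @ v) g h = fmult (subst2 u g h) (subst2 v g h)"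
  by (induction u) (simp_all add: subst2_Cons fmult_assoc reduced_subst2)

lemma subst2_finv: "subst2 (finv w) g h = finv (subst2 w g h)"
proof (induction w)
  case (Cons x w)
  have "subst2 [inv_letter x] g h = finv (letter_img g h x)"
    by (simp add: subst2_Cons letter_img_inv_letter fmult_Nil_right reduced_letter_img)
  then show ?case
    using Cons.IH finv_fmult[OF letter_img_carrier[OF g h] subst2_carrier]
    by (simp add: finv_Cons subst2_append subst2_Cons)
qed simp

lemma subst2_hom:
  assumes "\<phi> \<in> hom (free_grp n) (free_grp n)"
  shows "\<phi> (subst2 w g h) = subst2 w (\<phi> g) (\<phi> h)"
proof -
  interpret group_hom "free_grp n" "free_grp n" \<phi>
    using assms group_free_grp by (simp add: group_hom_def group_hom_axioms_def)
  have "\<phi> (finv z) = finv (\<phi> z)" if "z \<in> carrier (free_grp n)" for z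
    using hom_inv[OF that] that by (simp add: inv_free_grp)
  then have "\<phi> (letter_img g h x) = letter_img (\<phi> g) (\<phi> h) x" for x
    using g h by (simp add: letter_img_def Let_def)
  then show ?thesis
    using hom_mult[OF letter_img_carrier[OF g h] subst2_carrier] hom_one
    by (induction w) (simp_all add: subst2_Cons)
qed

lemma subst2_conjugate:
  "c \<in> carrier (free_grp n) \<Longrightarrow> subst2 w (conjugate c g) (conjugate c h) = conjugate c (subst2 w g h)"
  using subst2_hom[OF conjugate_hom] by simp

lemma cyc_len_subst2_conjugate_word: "cyc_len (subst2 (p @ C @ finv p) g h) = cyc_len (subst2 C g h)"
proof -
  have "subst2 (p @ C @ finv p) g h = conjugate (subst2 p g h) (subst2 C g h)"
    by (simp add: subst2_append subst2_finv conjugate_def)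
  then show ?thesis
    by (simp add: cyc_len_conjugate[OF subst2_carrier subst2_carrier])
qed

end

lemma fmult_finv_commute:
  assumes "reduced a" "reduced b" "fmult a b = fmult b a"
  shows "fmult a (finv b) = fmult (finv b) a"
proof -
  have "fmult a (finv b) = fmult (finv b) (fmult (fmult b a) (finv b))"
    using assms by (simp add: fmult_assoc[symmetric] fmult_finv_left reduced_fmult del: assms(3))
  also have "\<dots> = fmult (finv b) a"
    using assms(1,2) by (simp add: assms(3)[symmetric] fmult_assoc fmult_finv_right fmult_Nil_right)
  finally show ?thesis .
qed

lemma subst2_rev_if_commute:
  assumes g: "g \<in> carrier (free_grp n)" and h: "h \<in> carrier (free_grp n)"
    and gh: "fmult g h = fmult h g"
  shows "subst2 (rev w) g h = subst2 w g h"
proof -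
  note red = reduced_letter_img[OF g h]
  have "fmult z z' = fmult z' z" if "z \<in> {g, h}" "z' \<in> {g, h}" for z z'
    using that gh by auto
  then have img_commute: "fmult (letter_img g h x) (letter_img g h y) = fmult (letter_img g h y) (letter_img g h x)" for x y
    using g h by (auto simp: letter_img_def Let_def fmult_finv_commute reduced_if_carrier)
  have word_commute: "fmult (letter_img g h x) (subst2 v g h) = fmult (subst2 v g h) (letter_img g h x)" for x v
  proof (induction v)
    case Nil
    then show ?case
      using red by (simp add: fmult_Nil_right)
  next
    case (Cons y v)
    have "fmult (letter_img g h x) (subst2 (y # v) g h)
        = fmult (fmult (letter_img g h y) (letter_img g h x)) (subst2 v g h)"
      using red reduced_subst2[OF g h] by (simp add: subst2_Cons fmult_assoc img_commute)
    also have "\<dots> = fmult (letter_img g h y) (fmult (subst2 v g h) (letter_img g h x))"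
      using red reduced_subst2[OF g h] by (simp add: fmult_assoc Cons.IH)
    also have "\<dots> = fmult (subst2 (y # v) g h) (letter_img g h x)"
      using red reduced_subst2[OF g h] by (simp add: subst2_Cons fmult_assoc)
    finally show ?case .
  qed
  show ?thesis
  proof (induction w)
    case (Cons x w)
    then show ?case
      using red by (simp add: subst2_append[OF g h] subst2_Cons fmult_Nil_right word_commute)
  qed simp
qed

lemma cyc_len_subst2_finv_swap:
  assumes g: "g \<in> carrier (free_grp n)"
  shows "cyc_len (subst2 w (finv g) g) = cyc_len (subst2 w g (finv g))"
proof -
  have "subst2 w (finv g) g = subst2 (map inv_letter w) g (finv g)"
    by (induction w) (auto simp: subst2_Cons letter_img_def Let_def inv_letter_def)
  also have "\<dots> = subst2 (finv w) g (finv g)"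
  proof -
    have "fmult g (finv g) = fmult (finv g) g"
      by (simp add: fmult_finv_left fmult_finv_right)
    moreover have "rev (finv w) = map inv_letter w"
      by (simp add: finv_def)
    ultimately show ?thesis
      using subst2_rev_if_commute[OF g finv_carrier[OF g], of "finv w"] by simp
  qed
  also have "\<dots> = finv (subst2 w g (finv g))"
    using g by (simp add: subst2_finv finv_carrier)
  finally show ?thesis
    using g by (simp add: cyc_len_finv reduced_subst2 finv_carrier)
qed

section \<open>Cyclic length of substitutions with bounded cancellation\<close>

definition img_cancel :: "letter list \<Rightarrow> letter list \<Rightarrow> letter \<Rightarrow> letter \<Rightarrow> nat" where
  "img_cancel g h x y = cancel_len (letter_img g h x) (letter_img g h y)"

definition bounded_cancellation :: "letter list \<Rightarrow> letter list \<Rightarrow> bool" where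
  "bounded_cancellation g h \<longleftrightarrow>
     (\<forall>x y z. fst x < 2 \<longrightarrow> fst y < 2 \<longrightarrow> fst z < 2 \<longrightarrow> y \<noteq> inv_letter x \<longrightarrow> z \<noteq> inv_letter y \<longrightarrow>
        img_cancel g h x y + img_cancel g h y z < length (letter_img g h y))"

definition edge_weight :: "letter list \<Rightarrow> letter list \<Rightarrow> letter \<Rightarrow> letter \<Rightarrow> int" where
  "edge_weight g h x y = int (length (letter_img g h x)) - 2 * int (img_cancel g h x y)"

fun chain_weight :: "letter list \<Rightarrow> letter list \<Rightarrow> letter list \<Rightarrow> int" where
  "chain_weight g h (x # y # w) = edge_weight g h x y + chain_weight g h (y # w)"
| "chain_weight g h _ = 0"

lemma bounded_cancellationD:
  "bounded_cancellation g h \<Longrightarrow> fst x < 2 \<Longrightarrow> fst y < 2 \<Longrightarrow> fst z < 2 \<Longrightarrow>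
   y \<noteq> inv_letter x \<Longrightarrow> z \<noteq> inv_letter y \<Longrightarrow>
   img_cancel g h x y + img_cancel g h y z < length (letter_img g h y)"
  unfolding bounded_cancellation_def by blast

lemma chain_weight_append:
  "u \<noteq> [] \<Longrightarrow> v \<noteq> [] \<Longrightarrow>
   chain_weight g h (u @ v) = chain_weight g h u + edge_weight g h (last u) (hd v) + chain_weight g h v"
proof (induction u rule: induct_list012)
  case (3 x y u)
  then show ?case
    by (cases u) auto
qed (auto simp: neq_Nil_conv)

context
  fixes g h :: "letter list" and n :: nat
  assumes g: "g \<in> carrier (free_grp n)" and h: "h \<in> carrier (free_grp n)"
    and bc: "bounded_cancellation g h"
begin

(* The induction must also record that the image of the first letter survives, up to the part
   cancelled against the image of the second letter. *)
lemma subst2_chain_weight_prefix: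
  assumes "reduced w" "\<forall>x\<in>set w. fst x < 2" "w \<noteq> []"
  shows "int (length (subst2 w g h)) = chain_weight g h w + int (length (letter_img g h (last w)))
    \<and> (let k = length (letter_img g h (hd w)) -
               (case w of x # y # _ \<Rightarrow> img_cancel g h x y | _ \<Rightarrow> 0)
       in take k (subst2 w g h) = take k (letter_img g h (hd w)))"
  using assms
proof (induction w rule: induct_list012)
  case (2 x)
  then show ?case
    by (simp add: subst2_Cons fmult_Nil_right reduced_letter_img[OF g h])
next
  case (3 x y w)
  let ?X = "letter_img g h x" and ?Y = "letter_img g h y" and ?P = "subst2 (y # w) g h"
  define k where "k = img_cancel g h x y"
  define l where "l = (case y # w of y # z # _ \<Rightarrow> img_cancel g h y z | _ \<Rightarrow> 0)"
  have red: "reduced (y # w)" "y \<noteq> inv_letter x"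
    using "3.prems"(1) by (simp_all add: reduced_Cons_iff)
  have IH: "int (length ?P) = chain_weight g h (y # w) + int (length (letter_img g h (last (y # w))))"
    "take (length ?Y - l) ?P = take (length ?Y - l) ?Y"
    using "3.IH"(2)[OF red(1)] "3.prems"(2) by (simp_all add: l_def Let_def)
  have fst: "fst x < 2" "fst y < 2"
    using "3.prems"(2) by simp_all
  have kl: "k + l < length ?Y"
  proof (cases w)
    case Nil
    then show ?thesis
      using bounded_cancellationD[OF bc fst(1) fst(2) fst(2) red(2)] by (simp add: k_def l_def)
  next
    case (Cons z w')
    then have "fst z < 2" "z \<noteq> inv_letter y"
      using "3.prems" by (simp_all add: reduced_Cons_iff)
    then show ?thesis
      using bounded_cancellationD[OF bc fst, of z] red(2) Cons by (simp add: k_def l_def)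
  qed
  have kX: "k < length ?X"
    using bounded_cancellationD[OF bc fst(1) fst(1) fst(2) _ red(2)] by (simp add: k_def)
  have le: "Suc k \<le> length ?Y - l"
    using kl by simp
  then have prefix: "take (Suc k) ?P = take (Suc k) ?Y"
    using arg_cong[OF IH(2), of "take (Suc k)"] by (simp add: min_absorb1)
  have kP: "Suc k \<le> length ?P"
    using le arg_cong[OF IH(2), of length] by simp
  have "subst2 (x # y # w) g h = take (length ?X - k) ?X @ drop k ?P"
    using fmult_eq_take_drop_prefix[OF reduced_letter_img[OF g h] reduced_subst2[OF g h], of x ?Y "y # w"]
      prefix kX kl by (simp add: subst2_Cons[of x "y # w"] k_def img_cancel_def)
  then show ?case
    using IH(1) kX kP by (simp add: Let_def k_def edge_weight_def)
qed simp

lemma length_subst2_chain_weight: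
  "reduced w \<Longrightarrow> \<forall>x\<in>set w. fst x < 2 \<Longrightarrow> w \<noteq> [] \<Longrightarrow>
   int (length (subst2 w g h)) = chain_weight g h w + int (length (letter_img g h (last w)))"
  using subst2_chain_weight_prefix by blast

lemma cyc_len_subst2_chain_weight:
  assumes w: "reduced w" "cyclically_reduced w" "\<forall>x\<in>set w. fst x < 2" "w \<noteq> []"
  shows "int (cyc_len (subst2 w g h)) = chain_weight g h (w @ [hd w])"
proof -
  have ww: "reduced (w @ w)"
    using w by (simp add: reduced_append_iff cyclically_reduced_def)
  have "length (subst2 (w @ w) g h) = length (subst2 w g h) + cyc_len (subst2 w g h)"
    by (simp add: subst2_append[OF g h] length_fmult_self reduced_subst2[OF g h])
  moreover have "int (length (subst2 (w @ w) g h)) = chain_weight g h (w @ w) + int (length (letter_img g h (last w)))"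
    using length_subst2_chain_weight[OF ww] w by simp
  ultimately show ?thesis
    using length_subst2_chain_weight[OF w(1,3,4)] w(4)
    by (simp add: chain_weight_append)
qed

end

section \<open>Swap-balanced pairs\<close>

definition swap_coboundary :: "letter list \<Rightarrow> letter list \<Rightarrow> (letter \<Rightarrow> int) \<Rightarrow> bool" where
  "swap_coboundary g h \<phi> \<longleftrightarrow>
     (\<forall>x y. fst x < 2 \<longrightarrow> fst y < 2 \<longrightarrow> y \<noteq> inv_letter x \<longrightarrow>
        edge_weight g h x y - edge_weight h g x y = \<phi> x - \<phi> y)"

lemma swap_coboundaryD:
  "swap_coboundary g h \<phi> \<Longrightarrow> fst x < 2 \<Longrightarrow> fst y < 2 \<Longrightarrow> y \<noteq> inv_letter x \<Longrightarrow>
   edge_weight g h x y - edge_weight h g x y = \<phi> x - \<phi> y"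
  unfolding swap_coboundary_def by blast

lemma chain_weight_swap_diff:
  assumes "swap_coboundary g h \<phi>"
  shows "reduced w \<Longrightarrow> \<forall>x\<in>set w. fst x < 2 \<Longrightarrow> w \<noteq> [] \<Longrightarrow>
    chain_weight g h w - chain_weight h g w = \<phi> (hd w) - \<phi> (last w)"
proof (induction w rule: induct_list012)
  case (3 x y w)
  then have "edge_weight g h x y - edge_weight h g x y = \<phi> x - \<phi> y"
    by (intro swap_coboundaryD[OF assms]) (simp_all add: reduced_Cons_iff)
  then show ?case
    using 3 by (simp add: reduced_Cons_iff)
qed simp_all

lemma cyc_len_subst2_swap_if_coboundary:
  assumes g: "g \<in> carrier (free_grp n)" and h: "h \<in> carrier (free_grp n)"
    and bc: "bounded_cancellation g h" "bounded_cancellation h g" and cob: "swap_coboundary g h \<phi>"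
    and w: "w \<in> carrier (free_grp 2)"
  shows "cyc_len (subst2 w g h) = cyc_len (subst2 w h g)"
proof -
  obtain p C where wC: "w = p @ C @ finv p" and C: "cyclically_reduced C" "reduced C"
    using reduced_cyclic_decomp[OF reduced_if_carrier[OF w]] by blast
  have letters: "\<forall>x\<in>set C. fst x < 2"
    using w wC by (simp add: carrier_free_grp_iff)
  have cyc_len_C: "cyc_len (subst2 w g h) = cyc_len (subst2 C g h)" "cyc_len (subst2 w h g) = cyc_len (subst2 C h g)"
    unfolding wC by (rule cyc_len_subst2_conjugate_word[OF g h], rule cyc_len_subst2_conjugate_word[OF h g])
  show ?thesis
  proof (cases "C = []")
    case False
    have "reduced (C @ [hd C])"
      using C False by (simp add: reduced_append_iff cyclically_reduced_def)
    then have "chain_weight g h (C @ [hd C]) = chain_weight h g (C @ [hd C])"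
      using chain_weight_swap_diff[OF cob, of "C @ [hd C]"] letters False by (simp add: hd_append)
    then show ?thesis
      using cyc_len_subst2_chain_weight[OF g h bc(1) C(2,1) letters False]
        cyc_len_subst2_chain_weight[OF h g bc(2) C(2,1) letters False]
      by (simp add: cyc_len_C)
  qed (simp add: cyc_len_C)
qed

definition swap_balanced :: "letter list \<Rightarrow> letter list \<Rightarrow> bool" where
  "swap_balanced g h \<longleftrightarrow>
     bounded_cancellation g h \<and> bounded_cancellation h g \<and> (\<exists>\<phi>. swap_coboundary g h \<phi>)"

lemma swap_balanced_sym:
  assumes "swap_balanced g h"
  shows "swap_balanced h g"
proof -
  obtain \<phi> where "swap_coboundary g h \<phi>"
    using assms by (auto simp: swap_balanced_def)
  then have "swap_coboundary h g (\<lambda>x. - \<phi> x)"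
    unfolding swap_coboundary_def by (metis minus_diff_eq diff_minus_eq_add uminus_add_conv_diff)
  then show ?thesis
    using assms by (auto simp: swap_balanced_def)
qed

lemma cyc_len_subst2_swap_if_balanced:
  "g \<in> carrier (free_grp n) \<Longrightarrow> h \<in> carrier (free_grp n) \<Longrightarrow> swap_balanced g h \<Longrightarrow>
   w \<in> carrier (free_grp 2) \<Longrightarrow> cyc_len (subst2 w g h) = cyc_len (subst2 w h g)"
  unfolding swap_balanced_def using cyc_len_subst2_swap_if_coboundary by blast

lemma img_cancel_separated:
  assumes g: "g = p @ G @ finv p" "G \<noteq> []" "cyclically_reduced G"
    and h: "h = q @ H @ finv q" "H \<noteq> []" "cyclically_reduced H"
    and sep: "hd h \<noteq> hd g" "hd h \<noteq> inv_letter (last g)" "last h \<noteq> last g" "last h \<noteq> inv_letter (hd g)"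
    and x: "fst x < 2" and y: "fst y < 2" and yx: "y \<noteq> inv_letter x"
  shows "img_cancel g h x y = (if x = y then if fst x = 0 then length p else length q else 0)"
proof -
  have "g \<noteq> []" "h \<noteq> []"
    using g h by simp_all
  then have "cancel_len g h = 0" "cancel_len g (finv h) = 0" "cancel_len (finv g) h = 0"
    "cancel_len (finv g) (finv h) = 0" "cancel_len h g = 0" "cancel_len h (finv g) = 0"
    "cancel_len (finv h) g = 0" "cancel_len (finv h) (finv g) = 0"
    using sep by (auto simp: cancel_len_eq_0_iff hd_finv last_finv dest: sym)
  moreover have "cancel_len g g = length p" "cancel_len h h = length q"
    using cancel_len_conjugate_self g h by simp_all
  ultimately show ?thesis
    using fst_less_2_cases[OF x] fst_less_2_cases[OF y] yx
    by (auto simp: img_cancel_def cancel_len_finv_self)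
qed

lemma swap_balanced_if_separated:
  assumes g: "reduced g" "g \<noteq> []" and h: "reduced h" "h \<noteq> []" and cl: "cyc_len g = cyc_len h"
    and sep: "hd h \<noteq> hd g" "hd h \<noteq> inv_letter (last g)" "last h \<noteq> last g" "last h \<noteq> inv_letter (hd g)"
  shows "swap_balanced g h"
proof -
  obtain p G where gp: "g = p @ G @ finv p" and G: "cyclically_reduced G" "cyc_len g = length G"
    using g(1) by (rule reduced_cyclic_decomp)
  obtain q H where hq: "h = q @ H @ finv q" and H: "cyclically_reduced H" "cyc_len h = length H"
    using h(1) by (rule reduced_cyclic_decomp)
  have "cyc_len g \<noteq> 0"
    using g by (simp add: cyc_len_eq_0_iff)
  then have L: "0 < length G" "length H = length G"
    using G H cl by simp_all
  then have ne: "G \<noteq> []" "H \<noteq> []"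
    by auto
  have sep': "hd g \<noteq> hd h" "hd g \<noteq> inv_letter (last h)" "last g \<noteq> last h" "last g \<noteq> inv_letter (hd h)"
    using sep by (metis inv_letter_inv_letter)+
  have cgh: "img_cancel g h x y = (if x = y then if fst x = 0 then length p else length q else 0)"
    and chg: "img_cancel h g x y = (if x = y then if fst x = 0 then length q else length p else 0)"
    if "fst x < 2" "fst y < 2" "y \<noteq> inv_letter x" for x y
    using img_cancel_separated[OF gp ne(1) G(1) hq ne(2) H(1) sep that]
      img_cancel_separated[OF hq ne(2) H(1) gp ne(1) G(1) sep' that] by simp_all
  note len = length_letter_img[of _ g h] length_letter_img[of _ h g]
  have lg: "length g = 2 * length p + length G" "length h = 2 * length q + length G"
    using gp hq L by simp_all
  have bc: "bounded_cancellation g h" "bounded_cancellation h g"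
    unfolding bounded_cancellation_def using cgh chg len lg L by auto
  let ?\<phi> = "\<lambda>x. if fst x = 0 then 2 * int (length p) else 2 * int (length q)"
  have "edge_weight g h x y - edge_weight h g x y = ?\<phi> x - ?\<phi> y"
    if xy: "fst x < 2" "fst y < 2" "y \<noteq> inv_letter x" for x y
  proof -
    have "x \<noteq> y \<Longrightarrow> fst x \<noteq> fst y"
      using fst_less_2_cases[OF xy(1)] fst_less_2_cases[OF xy(2)] xy(3) by auto
    then show ?thesis
      using cgh[OF xy] chg[OF xy] len[OF xy(1)] lg xy(1,2) by (auto simp: edge_weight_def)
  qed
  then have "swap_coboundary g h ?\<phi>"
    unfolding swap_coboundary_def by blast
  with bc show ?thesis
    unfolding swap_balanced_def by blast
qed

lemma eq_if_cancel_len_cover: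
  assumes len: "length h = length g" and cover: "length g \<le> cancel_len g (finv h) + cancel_len (finv g) h"
  shows "h = g"
proof (rule nth_equalityI)
  fix j
  assume j: "j < length h"
  show "h ! j = g ! j"
  proof (cases "j < cancel_len (finv g) h")
    case True
    then show ?thesis
      using nth_cancel_len[OF True] len j by (simp add: nth_finv)
  next
    case False
    then have "length g - Suc j < cancel_len g (finv h)"
      using cover len j by linarith
    from nth_cancel_len[OF this] show ?thesis
      using len j by (simp add: nth_finv)
  qed
qed (rule len)

lemma cancel_len_sum_lt_if_cyclically_reduced:
  assumes g: "cyclically_reduced g" and h: "cyclically_reduced h" and len: "length h = length g"
    and "h \<noteq> g" "h \<noteq> finv g"
  shows "cancel_len g (finv h) + cancel_len (finv g) h + cancel_len g h + cancel_len h g < length g"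
proof -
  have "cancel_len g (finv h) + cancel_len (finv g) h < length g"
    using eq_if_cancel_len_cover[OF len] \<open>h \<noteq> g\<close> by linarith
  moreover have "cancel_len g h + cancel_len h g < length g"
    using eq_if_cancel_len_cover[of "finv h" g] len \<open>h \<noteq> finv g\<close> cancel_len_finv[of h g]
    by fastforce
  moreover have "cancel_len g (finv h) = 0 \<and> cancel_len (finv g) h = 0 \<or> cancel_len g h = 0 \<and> cancel_len h g = 0"
    using g h by (auto simp: cancel_len_eq_0_iff hd_finv last_finv cyclically_reduced_def)
  ultimately show ?thesis
    by linarith
qed

lemma swap_balanced_if_cyclically_reduced:
  assumes g: "cyclically_reduced g" and h: "cyclically_reduced h" and len: "length h = length g"
    and "h \<noteq> g" "h \<noteq> finv g"
  shows "swap_balanced g h"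
proof -
  define \<alpha> \<beta> \<gamma> \<delta> where "\<alpha> = cancel_len g (finv h)" and "\<beta> = cancel_len (finv g) h"
    and "\<gamma> = cancel_len g h" and "\<delta> = cancel_len h g"
  have sum: "\<alpha> + \<beta> + \<gamma> + \<delta> < length g"
    unfolding \<alpha>_def \<beta>_def \<gamma>_def \<delta>_def using cancel_len_sum_lt_if_cyclically_reduced assms by blast
  then have "g \<noteq> []"
    by auto
  have c: "cancel_len g g = 0" "cancel_len (finv g) (finv g) = 0"
    "cancel_len h h = 0" "cancel_len (finv h) (finv h) = 0"
    "cancel_len g (finv h) = \<alpha>" "cancel_len h (finv g) = \<alpha>"
    "cancel_len (finv g) h = \<beta>" "cancel_len (finv h) g = \<beta>"
    "cancel_len g h = \<gamma>" "cancel_len (finv h) (finv g) = \<gamma>"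
    "cancel_len h g = \<delta>" "cancel_len (finv g) (finv h) = \<delta>"
    using g h cancel_len_finv[of h "finv g"] cancel_len_finv[of "finv h" g] cancel_len_finv[of g h]
      cancel_len_finv[of h g] by (auto simp: \<alpha>_def \<beta>_def \<gamma>_def \<delta>_def cancel_len_eq_0_iff cancel_len_finv_self cyclically_reduced_def)
  have lens: "length (letter_img g h x) = length g" "length (letter_img h g x) = length g" if "fst x < 2" for x
    using length_letter_img[OF that] len by simp_all
  have "img_cancel g h x y + img_cancel g h y z < length g \<and> img_cancel h g x y + img_cancel h g y z < length g"
    if "fst x < 2" "fst y < 2" "fst z < 2" "y \<noteq> inv_letter x" "z \<noteq> inv_letter y" for x y z
    using fst_less_2_cases[OF that(1)] fst_less_2_cases[OF that(2)] fst_less_2_cases[OF that(3)] that(4,5)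
    unfolding img_cancel_def by (elim disjE) (use sum \<open>g \<noteq> []\<close> in \<open>simp_all add: c\<close>)
  then have bc: "bounded_cancellation g h" "bounded_cancellation h g"
    unfolding bounded_cancellation_def by (simp_all add: lens)
  let ?\<phi> = "\<lambda>x. if x = (0, False) \<or> x = (1, True) then 2 * int \<delta> else 2 * int \<gamma>"
  have "edge_weight g h x y - edge_weight h g x y = ?\<phi> x - ?\<phi> y"
    if "fst x < 2" "fst y < 2" "y \<noteq> inv_letter x" for x y
    using fst_less_2_cases[OF that(1)] fst_less_2_cases[OF that(2)] that(3) len
    unfolding edge_weight_def img_cancel_def by (elim disjE) (simp_all add: c)
  then have "swap_coboundary g h ?\<phi>"
    unfolding swap_coboundary_def by blast
  with bc show ?thesis
    unfolding swap_balanced_def by blast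
qed

section \<open>Minimal simultaneous conjugates\<close>

lemma length_conjugate_last:
  assumes z: "reduced z" and nc: "\<not> cyclically_reduced z"
  shows "length (conjugate [last z] z) + 2 = length z"
proof -
  obtain a u where au: "z = a # u" "u \<noteq> []" "a = inv_letter (last u)"
    using nc by (cases z) (auto simp: cyclically_reduced_def split: if_splits)
  define m where "m = butlast u"
  have len: "length u = Suc (length m)"
    using au(2) by (simp add: m_def)
  have "fmult z [inv_letter (last u)] = a # m"
    using fmult_snoc[OF z] au by (simp add: m_def butlast_append)
  then have "conjugate [last u] z = m"
    using au(3) by (simp add: conjugate_letter cons_red_cancel)
  then show ?thesis
    using au len by simp
qed

lemma ends_if_length_conjugate_letter:
  assumes z: "reduced z" and long: "length z + 2 \<le> length (conjugate [t] z)"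
  shows "z \<noteq> [] \<and> hd z \<noteq> inv_letter t \<and> last z \<noteq> t"
proof (cases "z \<noteq> [] \<and> last z = t")
  case True
  then show ?thesis
    using long by (simp add: conjugate_letter fmult_snoc[OF z] length_cons_red split: if_splits)
next
  case False
  then have "conjugate [t] z = cons_red t (z @ [inv_letter t])"
    using fmult_snoc[OF z] by (auto simp: conjugate_letter)
  then have "length (conjugate [t] z) =
      (if hd (z @ [inv_letter t]) = inv_letter t then length z else Suc (Suc (length z)))"
    by (simp add: length_cons_red)
  then show ?thesis
    using long False by (cases z) (auto split: if_splits)
qed

lemma swap_balanced_if_not_cyclically_reduced:
  assumes g: "reduced g" "\<not> cyclically_reduced g" and h: "reduced h" and cl: "cyc_len g = cyc_len h"
    and min: "length g + length h \<le> length (conjugate [last g] g) + length (conjugate [last g] h)"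
  shows "swap_balanced g h"
proof -
  have "length h + 2 \<le> length (conjugate [last g] h)"
    using length_conjugate_last[OF g] min by simp
  then have "h \<noteq> []" "hd h \<noteq> inv_letter (last g)" "last h \<noteq> last g"
    using ends_if_length_conjugate_letter[OF h] by auto
  moreover have "g \<noteq> []" "hd g = inv_letter (last g)"
    using g(2) by (auto simp: cyclically_reduced_def)
  ultimately show ?thesis
    by (intro swap_balanced_if_separated[OF g(1) _ h(1) _ cl]) auto
qed

lemma swap_balanced_if_minimal:
  assumes g: "g \<in> carrier (free_grp n)" and h: "h \<in> carrier (free_grp n)"
    and cl: "cyc_len g = cyc_len h" and "h \<noteq> g" "h \<noteq> finv g"
    and min: "\<And>t. fst t < n \<Longrightarrow> length g + length h \<le> length (conjugate [t] g) + length (conjugate [t] h)"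
  shows "swap_balanced g h"
proof -
  have red: "reduced g" "reduced h"
    using g h by (simp_all add: reduced_if_carrier)
  have last_letter: "fst (last z) < n" if "z \<in> carrier (free_grp n)" "\<not> cyclically_reduced z" for z
    using that by (auto simp: carrier_free_grp_iff cyclically_reduced_def)
  consider "cyclically_reduced g" "cyclically_reduced h" | "\<not> cyclically_reduced g" | "\<not> cyclically_reduced h"
    by blast
  then show ?thesis
  proof cases
    case 1
    then have "length h = length g"
      using cl by (simp add: cyc_len_eq_length)
    with 1 show ?thesis
      using swap_balanced_if_cyclically_reduced assms(4,5) by blast
  next
    case 2
    then show ?thesis
      using swap_balanced_if_not_cyclically_reduced red cl min last_letter[OF g] by blast
  next
    case 3
    have "swap_balanced h g"
      using swap_balanced_if_not_cyclically_reduced[OF red(2) 3 red(1) cl[symmetric]]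
        min[OF last_letter[OF h 3]] by simp
    then show ?thesis
      by (rule swap_balanced_sym)
  qed
qed

lemma swap_balanced_minimal_conjugate:
  assumes g: "g \<in> carrier (free_grp n)" and h: "h \<in> carrier (free_grp n)"
    and cl: "cyc_len g = cyc_len h" and ne: "h \<noteq> g" "h \<noteq> finv g"
  obtains c where "c \<in> carrier (free_grp n)" "swap_balanced (conjugate c g) (conjugate c h)"
proof -
  define total_length where "total_length c = length (conjugate c g) + length (conjugate c h)" for c
  obtain c where c: "c \<in> carrier (free_grp n)"
    and c_min: "\<And>d. d \<in> carrier (free_grp n) \<Longrightarrow> total_length c \<le> total_length d"
    using ex_has_least_nat[of "\<lambda>c. c \<in> carrier (free_grp n)" "[]" total_length]
    by (auto simp: carrier_free_grp_iff)
  have "swap_balanced (conjugate c g) (conjugate c h)"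
  proof (rule swap_balanced_if_minimal)
    show "conjugate c g \<in> carrier (free_grp n)" "conjugate c h \<in> carrier (free_grp n)"
      using c g h by (simp_all add: conjugate_carrier)
    show "cyc_len (conjugate c g) = cyc_len (conjugate c h)"
      using c g h cl by (simp add: cyc_len_conjugate)
    show "conjugate c h \<noteq> conjugate c g"
      using ne conjugate_finv_conjugate[OF c g] conjugate_finv_conjugate[OF c h] by metis
    show "conjugate c h \<noteq> finv (conjugate c g)"
      using ne conjugate_finv_conjugate[OF c finv_carrier[OF g]] conjugate_finv_conjugate[OF c h]
      by (metis finv_conjugate[OF c g])
    fix t :: letter
    assume "fst t < n"
    then have t: "[t] \<in> carrier (free_grp n)"
      by (simp add: carrier_free_grp_iff)
    then show "length (conjugate c g) + length (conjugate c h) \<le>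
        length (conjugate [t] (conjugate c g)) + length (conjugate [t] (conjugate c h))"
      using c_min[OF fmult_carrier[OF t c]]
      by (simp add: total_length_def conjugate_conjugate[OF c t g] conjugate_conjugate[OF c t h])
  qed
  with c that show ?thesis
    by blast
qed

lemma cyc_len_subst2_swap:
  assumes g: "g \<in> carrier (free_grp n)" and h: "h \<in> carrier (free_grp n)"
    and cl: "cyc_len g = cyc_len h" and w: "w \<in> carrier (free_grp 2)"
  shows "cyc_len (subst2 w g h) = cyc_len (subst2 w h g)"
proof -
  consider "h = g" | "h = finv g" | "h \<noteq> g" "h \<noteq> finv g"
    by blast
  then show ?thesis
  proof cases
    case 2
    then show ?thesis
      using cyc_len_subst2_finv_swap[OF g] by simp
  next
    case 3
    then obtain c where c: "c \<in> carrier (free_grp n)" and bal: "swap_balanced (conjugate c g) (conjugate c h)"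
      using swap_balanced_minimal_conjugate[OF g h cl] by blast
    have "cyc_len (subst2 w (conjugate c g) (conjugate c h)) = cyc_len (subst2 w (conjugate c h) (conjugate c g))"
      using cyc_len_subst2_swap_if_balanced[OF conjugate_carrier[OF c g] conjugate_carrier[OF c h] bal w] .
    then show ?thesis
      using c g h by (simp add: subst2_conjugate cyc_len_conjugate subst2_carrier)
  qed simp
qed

theorem theorem1p4:
  fixes n :: nat and g h w :: "letter list"
  assumes "n \<ge> 2"
    and "g \<in> carrier (free_grp n)" and "h \<in> carrier (free_grp n)"
    and "translation_equivalent n g h"
    and "w \<in> carrier (free_grp 2)"
  shows "translation_equivalent n (subst2 w g h) (subst2 w h g)"
  unfolding translation_equivalent_def
proof
  fix \<phi>
  assume \<phi>: "\<phi> \<in> iso (free_grp n) (free_grp n)"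
  then have hom: "\<phi> \<in> hom (free_grp n) (free_grp n)"
    by (simp add: iso_def)
  have "\<phi> g \<in> carrier (free_grp n)" "\<phi> h \<in> carrier (free_grp n)"
    using hom assms(2,3) by (auto simp: hom_def)
  moreover have "cyc_len (\<phi> g) = cyc_len (\<phi> h)"
    using assms(4) \<phi> unfolding translation_equivalent_def by blast
  ultimately show "cyc_len (\<phi> (subst2 w g h)) = cyc_len (\<phi> (subst2 w h g))"
    using cyc_len_subst2_swap[OF _ _ _ assms(5)] assms(2,3) by (simp add: subst2_hom[OF _ _ hom])
qed

end
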